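(* Assume the setting of the context, fix $\Delta=(h,\Delta x)$, and fix a policy $\mathsf{c}=(\mathsf{c}_{i,j})$ with $\mathsf{c}_{i,j}\in\mathcal{C}^\Delta_j(x_i)$ for all $i\in\mathbb{N}$, $j=1,2$. If $\mathbf{U},\mathbf{V}\in B(\mathcal{A}^{\Delta x})^2$ satisfy $$F^\Delta_j\big(x_i,\mathsf{c}_{i,j},(U_{i,j},U_{i,\bar\jmath}),U_{\cdot,j}\big)\le0\quad\text{and}\quad F^\Delta_j\big(x_i,\mathsf{c}_{i,j},(V_{i,j},V_{i,\bar\jmath}),V_{\cdot,j}\big)\ge0\qquad\forall i\in\mathbb{N},\ j=1,2,$$ then $U_{i,j}\le V_{i,j}$ for all $i,j$.
   Context: Constants: $\rho>0$, $r<\rho$, $0<y_1<y_2$, $\gamma>1$, $\underline{x}\le0$ with $\rho\underline{x}+y_j>0$, $\lambda_1,\lambda_2\ge0$; $\bar\jmath=3-j$; $u(c)=\frac{c^{1-\gamma}}{1-\gamma}$ for $c>0$, $u(0)=-\infty$. Discretization $\Delta=(h,\Delta x)$, $h,\Delta x>0$, $\rho h<1$, $\lambda_jh<1$. Grid $x_i=\underline{x}+i\Delta x$, $i\in\mathbb{N}=\{0,1,\dots\}$; $B(\mathcal{A}^{\Delta x})$ = bounded real sequences indexed by $\mathbb{N}$. $\beta_k(x)=\max\{0,1-|x-x_k|/\Delta x\}$ for $x\ge\underline{x}$. $\mathcal{C}^\Delta_j(x_i)=\{c\ge0:x_i+h(rx_i+y_j-c)\ge\underline{x}\}$, $s_{i,j}(c)=rx_i+y_j-c$.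 Linearized scheme, for fixed $c\ge0$: $$F^\Delta_j(x_i,c,(\mathsf{q}_j,\mathsf{q}_{\bar\jmath}),\mathsf{U})=\rho\mathsf{q}_j-(1-\rho h)\lambda_j(\mathsf{q}_{\bar\jmath}-\mathsf{q}_j)-\Big(u(c)+\frac{(1-\rho h)(1-\lambda_jh)}{h}\Big(\sum_k\beta_k(x_i+hs_{i,j}(c))\mathsf{U}_k-\mathsf{q}_j\Big)\Big).$$ *)

theory Defs
  imports "HOL-Analysis.Analysis"
begin

definition util :: "real \<Rightarrow> real \<Rightarrow> ereal" where
  "util gam c = (if c > 0 then ereal (c powr (1 - gam) / (1 - gam)) else -\<infinity>)"

definition grid :: "real \<Rightarrow> real \<Rightarrow> nat \<Rightarrow> real" where
  "grid xlow dx i = xlow + real i * dx"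

definition hatb :: "real \<Rightarrow> real \<Rightarrow> nat \<Rightarrow> real \<Rightarrow> real" where
  "hatb xlow dx k x = max 0 (1 - \<bar>x - grid xlow dx k\<bar> / dx)"

text \<open>Admissible controls C_j(x_i) (j is given through the income y_j).\<close>
definition admissible :: "real \<Rightarrow> real \<Rightarrow> real \<Rightarrow> real \<Rightarrow> real \<Rightarrow> nat \<Rightarrow> real set" where
  "admissible r xlow dx h yj i =
     {c. c \<ge> 0 \<and> grid xlow dx i + h * (r * grid xlow dx i + yj - c) \<ge> xlow}"

definition Fscheme ::
  "real \<Rightarrow> real \<Rightarrow> real \<Rightarrow> real \<Rightarrow> real \<Rightarrow> real \<Rightarrow> real \<Rightarrow> real \<Rightarrow>
   nat \<Rightarrow> real \<Rightarrow> real \<Rightarrow> real \<Rightarrow> (nat \<Rightarrow> real) \<Rightarrow> ereal" where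
  "Fscheme rho r gam xlow h dx yj lamj i c qj qjb U =
     ereal (rho * qj - (1 - rho * h) * lamj * (qjb - qj))
     - (util gam c + ereal ((1 - rho * h) * (1 - lamj * h) / h *
         ((\<Sum>k. hatb xlow dx k (grid xlow dx i + h * (r * grid xlow dx i + yj - c)) * U k) - qj)))"

end

theory Submission
  imports Defs
begin

text \<open>The scheme is monotone: \<open>F\<close> is \<open>(\<rho> + b) q\<^sub>j\<close> minus nonnegative multiples of the
  value in the other regime and of the hat-function interpolant of \<open>U\<close> (a convex combination
  of two grid values), minus \<open>u(c)\<close>, where the coefficients sum to
  \<open>b = (1 - \<rho>h)(\<lambda>\<^sub>j + (1 - \<lambda>\<^sub>jh)/h)\<close>.
  Since \<open>u(0) = -\<infinity>\<close>, a subsolution forces \<open>c > 0\<close>, so the utility terms cancel when the sub-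
  and supersolution inequalities are subtracted; this bounds \<open>U - V\<close> at every node by
  \<open>b M / (\<rho> + b)\<close>, where \<open>M\<close> is the supremum of \<open>U - V\<close>. If \<open>M > 0\<close> this is a fixed fraction
  of \<open>M\<close>, contradicting the choice of \<open>M\<close>.\<close>

lemma nonpos_if_le_contracted_Sup:
  fixes w \<theta> :: "'a \<Rightarrow> real"
  assumes bdd: "bdd_above (w ` A)"
    and \<theta>: "\<And>x. x \<in> A \<Longrightarrow> 0 \<le> \<theta> x \<and> \<theta> x \<le> k" and "k < 1"
    and contr: "\<And>x. x \<in> A \<Longrightarrow> w x \<le> \<theta> x * Sup (w ` A)"
    and "x \<in> A"
  shows "w x \<le> 0"
proof -
  define M where "M = Sup (w ` A)"
  have upper: "w y \<le> M" if "y \<in> A" for y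
    unfolding M_def using bdd that by (intro cSup_upper) auto
  have "M \<le> 0"
  proof (rule ccontr)
    assume "\<not> M \<le> 0"
    then have "M > 0" by simp
    have "w y \<le> k * M" if "y \<in> A" for y
      using contr[OF that] \<theta>[OF that] \<open>M > 0\<close> mult_right_mono[of "\<theta> y" k M]
      unfolding M_def by linarith
    then have "M \<le> k * M"
      unfolding M_def using \<open>x \<in> A\<close> by (intro cSup_least) (auto simp: M_def)
    with \<open>M > 0\<close> \<open>k < 1\<close> show False by simp
  qed
  with upper[OF \<open>x \<in> A\<close>] show ?thesis by simp
qed

lemma hatb_suminf_two_point:
  fixes xlow dx z :: real
  assumes "dx > 0" and "xlow \<le> z"
  obtains p q n where "0 \<le> p" "0 \<le> q" "p + q = 1"
    "\<And>f. (\<Sum>k. hatb xlow dx k z * f k) = p * f n + q * f (Suc n)"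
proof -
  define t where "t = (z - xlow) / dx"
  define n where "n = nat \<lfloor>t\<rfloor>"
  have "t \<ge> 0" using assms by (simp add: t_def)
  then have n: "real n \<le> t" "t < real n + 1"
    by (simp_all add: n_def of_nat_nat)
  have hatb_t: "hatb xlow dx k z = max 0 (1 - \<bar>t - real k\<bar>)" for k
  proof -
    have "\<bar>z - grid xlow dx k\<bar> / dx = \<bar>(z - grid xlow dx k) / dx\<bar>"
      using assms by simp
    also have "(z - grid xlow dx k) / dx = t - real k"
      using assms by (simp add: grid_def t_def field_simps)
    finally show ?thesis by (simp add: hatb_def)
  qed
  have vanish: "hatb xlow dx k z = 0" if "k \<notin> {n, Suc n}" for k
  proof -
    have "real k \<le> real n - 1 \<or> real k \<ge> real n + 2" using that by auto
    then show ?thesis unfolding hatb_t using n by auto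
  qed
  have "(\<Sum>k. hatb xlow dx k z * f k) = hatb xlow dx n z * f n + hatb xlow dx (Suc n) z * f (Suc n)"
    for f
  proof -
    have "(\<Sum>k. hatb xlow dx k z * f k) = (\<Sum>k\<in>{n, Suc n}. hatb xlow dx k z * f k)"
      by (rule suminf_finite) (auto simp: vanish)
    then show ?thesis by simp
  qed
  moreover have "hatb xlow dx n z + hatb xlow dx (Suc n) z = 1"
    unfolding hatb_t using n by auto
  moreover have "hatb xlow dx k z \<ge> 0" for k
    by (simp add: hatb_def)
  ultimately show ?thesis
    using that[of "hatb xlow dx n z" "hatb xlow dx (Suc n) z" n] by blast
qed

lemma hatb_suminf_diff_le:
  fixes xlow dx z M :: real
  assumes "dx > 0" and "xlow \<le> z" and "\<And>k. f k - g k \<le> M"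
  shows "(\<Sum>k. hatb xlow dx k z * f k) - (\<Sum>k. hatb xlow dx k z * g k) \<le> M"
proof -
  obtain p q n where pq: "0 \<le> p" "0 \<le> q" "p + q = 1"
    and sum: "\<And>f. (\<Sum>k. hatb xlow dx k z * f k) = p * f n + q * f (Suc n)"
    using hatb_suminf_two_point[OF assms(1,2)] by metis
  have "(\<Sum>k. hatb xlow dx k z * f k) - (\<Sum>k. hatb xlow dx k z * g k)
      = p * (f n - g n) + q * (f (Suc n) - g (Suc n))"
    unfolding sum by (simp add: right_diff_distrib)
  also have "\<dots> \<le> p * M + q * M"
    using pq assms(3) by (intro add_mono mult_left_mono) auto
  also have "\<dots> = M"
    using pq(3) by (metis distrib_right mult_1)
  finally show ?thesis .
qed

lemma Fscheme_eq_infinity_if_not_pos: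
  assumes "\<not> c > 0"
  shows "Fscheme rho r gam xlow h dx yj lamj i c qj qjb U = \<infinity>"
  using assms by (simp add: Fscheme_def util_def)

lemma Fscheme_eq_ereal_if_pos:
  assumes "c > 0"
  shows "Fscheme rho r gam xlow h dx yj lamj i c qj qjb U =
     ereal (rho * qj - (1 - rho * h) * lamj * (qjb - qj)
     - (c powr (1 - gam) / (1 - gam) + (1 - rho * h) * (1 - lamj * h) / h *
         ((\<Sum>k. hatb xlow dx k (grid xlow dx i + h * (r * grid xlow dx i + yj - c)) * U k) - qj)))"
  using assms by (simp add: Fscheme_def util_def)

definition Fscheme_weight :: "real \<Rightarrow> real \<Rightarrow> real \<Rightarrow> real" where
  "Fscheme_weight rho h lamj = (1 - rho * h) * lamj + (1 - rho * h) * (1 - lamj * h) / h"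

definition Fscheme_contraction :: "real \<Rightarrow> real \<Rightarrow> real \<Rightarrow> real" where
  "Fscheme_contraction rho h lamj = Fscheme_weight rho h lamj / (rho + Fscheme_weight rho h lamj)"

lemma Fscheme_weight_nonneg:
  assumes "h > 0" and "rho * h < 1" and "lamj \<ge> 0" and "lamj * h < 1"
  shows "Fscheme_weight rho h lamj \<ge> 0"
  using assms unfolding Fscheme_weight_def by simp

lemma Fscheme_contraction_bounds:
  assumes "rho > 0" and "h > 0" and "rho * h < 1" and "lamj \<ge> 0" and "lamj * h < 1"
  shows "0 \<le> Fscheme_contraction rho h lamj" and "Fscheme_contraction rho h lamj < 1"
  using Fscheme_weight_nonneg[OF assms(2-5)] \<open>rho > 0\<close>
  by (simp_all add: Fscheme_contraction_def)

lemma Fscheme_sub_super_diff_le: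
  assumes sub: "Fscheme rho r gam xlow h dx yj lamj i c qU qbU U \<le> 0"
    and super: "Fscheme rho r gam xlow h dx yj lamj i c qV qbV V \<ge> 0"
    and "rho > 0" and "h > 0" and "dx > 0" and "rho * h < 1" and "lamj \<ge> 0" and "lamj * h < 1"
    and c: "c \<in> admissible r xlow dx h yj i"
    and "qbU - qbV \<le> M" and "\<And>k. U k - V k \<le> M"
  shows "qU - qV \<le> Fscheme_contraction rho h lamj * M"
proof -
  have "c > 0"
    using sub Fscheme_eq_infinity_if_not_pos[of c] by (cases "c > 0") auto
  define z where "z = grid xlow dx i + h * (r * grid xlow dx i + yj - c)"
  define l where "l = (1 - rho * h) * lamj"
  define a where "a = (1 - rho * h) * (1 - lamj * h) / h"
  define u where "u = c powr (1 - gam) / (1 - gam)"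
  define SU where "SU = (\<Sum>k. hatb xlow dx k z * U k)"
  define SV where "SV = (\<Sum>k. hatb xlow dx k z * V k)"
  have "rho * qU - l * (qbU - qU) - (u + a * (SU - qU)) \<le> 0"
    using sub unfolding Fscheme_eq_ereal_if_pos[OF \<open>c > 0\<close>]
    by (simp add: z_def l_def a_def u_def SU_def)
  moreover have "rho * qV - l * (qbV - qV) - (u + a * (SV - qV)) \<ge> 0"
    using super unfolding Fscheme_eq_ereal_if_pos[OF \<open>c > 0\<close>]
    by (simp add: z_def l_def a_def u_def SV_def)
  ultimately have "(rho + l + a) * (qU - qV) \<le> l * (qbU - qbV) + a * (SU - SV)"
    by (simp add: algebra_simps)
  also have "\<dots> \<le> l * M + a * M"
  proof -
    have "xlow \<le> z" using c by (simp add: admissible_def z_def)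
    then have "SU - SV \<le> M"
      unfolding SU_def SV_def using assms(11) by (intro hatb_suminf_diff_le[OF \<open>dx > 0\<close>])
    moreover have "l \<ge> 0" "a \<ge> 0" using assms(4-8) by (simp_all add: l_def a_def)
    ultimately show ?thesis
      using assms(10) by (intro add_mono mult_left_mono) auto
  qed
  finally have "(rho + Fscheme_weight rho h lamj) * (qU - qV) \<le> Fscheme_weight rho h lamj * M"
    by (simp add: Fscheme_weight_def l_def a_def algebra_simps)
  moreover have "rho + Fscheme_weight rho h lamj > 0"
    using Fscheme_weight_nonneg[OF assms(4,6-8)] \<open>rho > 0\<close> by simp
  ultimately show ?thesis
    by (simp add: Fscheme_contraction_def field_simps)
qed

theorem mainTheorem12:
  fixes rho r gam xlow h dx :: real
    and y lam :: "nat \<Rightarrow> real"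
    and cp :: "nat \<Rightarrow> nat \<Rightarrow> real"
    and U V :: "nat \<Rightarrow> nat \<Rightarrow> real"
  assumes "rho > 0" and "r < rho" and "0 < y 1" and "y 1 < y 2" and "gam > 1"
    and "xlow \<le> 0" and "\<And>j. j \<in> {1, 2} \<Longrightarrow> rho * xlow + y j > 0"
    and "\<And>j. j \<in> {1, 2} \<Longrightarrow> lam j \<ge> 0"
    and "h > 0" and "dx > 0" and "rho * h < 1"
    and "\<And>j. j \<in> {1, 2} \<Longrightarrow> lam j * h < 1"
    and "\<And>i j. j \<in> {1, 2} \<Longrightarrow> cp i j \<in> admissible r xlow dx h (y j) i"
    and "\<exists>M. \<forall>i. \<forall>j\<in>{1, 2}. \<bar>U i j\<bar> \<le> M"
    and "\<exists>M. \<forall>i. \<forall>j\<in>{1, 2}. \<bar>V i j\<bar> \<le> M"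
    and "\<And>i j. j \<in> {1, 2} \<Longrightarrow>
           Fscheme rho r gam xlow h dx (y j) (lam j) i (cp i j) (U i j) (U i (3 - j)) (\<lambda>k. U k j) \<le> 0"
    and "\<And>i j. j \<in> {1, 2} \<Longrightarrow>
           Fscheme rho r gam xlow h dx (y j) (lam j) i (cp i j) (V i j) (V i (3 - j)) (\<lambda>k. V k j) \<ge> 0"
  shows "\<forall>i. \<forall>j\<in>{1, 2}. U i j \<le> V i j"
proof -
  define A where "A = (UNIV :: nat set) \<times> {1, 2 :: nat}"
  define w where "w = (\<lambda>(i, j). U i j - V i j)"
  define \<theta> where "\<theta> j = Fscheme_contraction rho h (lam j)" for j
  have \<theta>: "0 \<le> \<theta> j" "\<theta> j < 1" if "j \<in> {1, 2}" for j
    unfolding \<theta>_def using assms(1,9,11) assms(8,12)[OF that] by (rule Fscheme_contraction_bounds)+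
  have bdd: "bdd_above (w ` A)"
  proof -
    obtain MU MV where "\<forall>i. \<forall>j\<in>{1, 2}. \<bar>U i j\<bar> \<le> MU" "\<forall>i. \<forall>j\<in>{1, 2}. \<bar>V i j\<bar> \<le> MV"
      using assms(14,15) by blast
    then have "U i j - V i j \<le> MU + MV" if "j \<in> {1, 2}" for i j
      using that by (smt (verit, best))
    then show ?thesis by (auto simp: bdd_above_def A_def w_def)
  qed
  have upper: "U i j - V i j \<le> Sup (w ` A)" if "j \<in> {1, 2}" for i j
    using cSup_upper[OF imageI[of "(i, j)" A w] bdd] that by (simp add: A_def w_def)
  have "w (i, j) \<le> \<theta> j * Sup (w ` A)" if "j \<in> {1, 2}" for i j
  proof -
    have "3 - j \<in> {1, 2}" using that by auto
    from Fscheme_sub_super_diff_le[OF assms(16,17)[OF that] assms(1,9-11)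
        assms(8,12,13)[OF that] upper[OF this] upper[OF that]]
    show ?thesis by (simp add: w_def \<theta>_def)
  qed
  then have "w x \<le> 0" if "x \<in> A" for x
    using that \<theta> by (intro nonpos_if_le_contracted_Sup[OF bdd, where \<theta> = "\<lambda>(i, j). \<theta> j"
      and k = "max (\<theta> 1) (\<theta> 2)"]) (auto simp: A_def)
  then show ?thesis by (auto simp: A_def w_def)
qed

end
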